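(* Let $\tau$ be an infinite cardinal and $X$ a space with $\chi(X)\le\tau$. There is no continuous, effective and transitive action on $X$ of a topological group $G$ with $\psi(G)>\tau$ and $\mathrm{inv}(G)\le\tau$.
   Context: All spaces are Tychonoff. An action of $G$ on $X$ is effective if the only $g\in G$ with $gx=x$ for all $x\in X$ is the unit, and transitive if $Gx=X$. $\psi(G)$ is the pseudocharacter of $G$. The invariance number $\mathrm{inv}(G)$ is the least infinite cardinal $\tau$ such that for every neighborhood $U$ of the unit there is a family $\gamma$ of at most $\tau$ neighborhoods of the unit such that for each $x\in G$ some $V\in\gamma$ satisfies $xVx^{-1}\subset U$. *)

theory Defs
  imports "HOL-Analysis.Analysis" "HOL-Algebra.Group" "HOL-Library.Equipollence"
begin

text \<open>Cardinals: an infinite cardinal tau is represented by an infinite set K of cardinality tau;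
  "a family has at most tau members" is rendered as \<open>F \<lesssim> K\<close>.\<close>

definition tychonoff_space :: "'a topology \<Rightarrow> bool" where
  "tychonoff_space T \<longleftrightarrow> completely_regular_space T \<and> t1_space T"

definition topological_group :: "('a, 'b) monoid_scheme \<Rightarrow> 'a topology \<Rightarrow> bool" where
  "topological_group G T \<longleftrightarrow> group G \<and> topspace T = carrier G
     \<and> continuous_map (prod_topology T T) T (\<lambda>p. fst p \<otimes>\<^bsub>G\<^esub> snd p)
     \<and> continuous_map T T (\<lambda>x. inv\<^bsub>G\<^esub> x)"

definition character_le :: "'a topology \<Rightarrow> 'k set \<Rightarrow> bool" where
  "character_le T K \<longleftrightarrow> (\<forall>x\<in>topspace T. \<exists>\<B>. \<B> \<lesssim> K \<and> (\<forall>V\<in>\<B>. openin T V \<and> x \<in> V)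
      \<and> (\<forall>U. openin T U \<and> x \<in> U \<longrightarrow> (\<exists>V\<in>\<B>. V \<subseteq> U)))"

definition pseudocharacter_le :: "'a topology \<Rightarrow> 'k set \<Rightarrow> bool" where
  "pseudocharacter_le T K \<longleftrightarrow> (\<forall>x\<in>topspace T. \<exists>\<gamma>. \<gamma> \<lesssim> K \<and> (\<forall>V\<in>\<gamma>. openin T V \<and> x \<in> V)
      \<and> topspace T \<inter> \<Inter>\<gamma> = {x})"

definition invariance_le :: "('a, 'b) monoid_scheme \<Rightarrow> 'a topology \<Rightarrow> 'k set \<Rightarrow> bool" where
  "invariance_le G T K \<longleftrightarrow> (\<forall>U. openin T U \<and> \<one>\<^bsub>G\<^esub> \<in> U \<longrightarrow>
     (\<exists>\<gamma>. \<gamma> \<lesssim> K \<and> (\<forall>V\<in>\<gamma>. openin T V \<and> \<one>\<^bsub>G\<^esub> \<in> V) \<and>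
        (\<forall>x\<in>carrier G. \<exists>V\<in>\<gamma>. (\<lambda>v. x \<otimes>\<^bsub>G\<^esub> v \<otimes>\<^bsub>G\<^esub> inv\<^bsub>G\<^esub> x) ` V \<subseteq> U)))"

definition continuous_action ::
    "('a, 'b) monoid_scheme \<Rightarrow> 'a topology \<Rightarrow> 'x topology \<Rightarrow> ('a \<Rightarrow> 'x \<Rightarrow> 'x) \<Rightarrow> bool" where
  "continuous_action G TG X act \<longleftrightarrow>
     (\<forall>x\<in>topspace X. act \<one>\<^bsub>G\<^esub> x = x)
   \<and> (\<forall>g\<in>carrier G. \<forall>h\<in>carrier G. \<forall>x\<in>topspace X. act (g \<otimes>\<^bsub>G\<^esub> h) x = act g (act h x))
   \<and> continuous_map (prod_topology TG X) X (\<lambda>p. act (fst p) (snd p))"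

definition effective_action :: "('a, 'b) monoid_scheme \<Rightarrow> 'x topology \<Rightarrow> ('a \<Rightarrow> 'x \<Rightarrow> 'x) \<Rightarrow> bool" where
  "effective_action G X act \<longleftrightarrow>
     (\<forall>g\<in>carrier G. (\<forall>x\<in>topspace X. act g x = x) \<longrightarrow> g = \<one>\<^bsub>G\<^esub>)"

definition transitive_action :: "('a, 'b) monoid_scheme \<Rightarrow> 'x topology \<Rightarrow> ('a \<Rightarrow> 'x \<Rightarrow> 'x) \<Rightarrow> bool" where
  "transitive_action G X act \<longleftrightarrow>
     (\<forall>x\<in>topspace X. (\<lambda>g. act g x) ` carrier G = topspace X)"

end

theory Submission
  imports Defs
begin

text \<open>Fix a point x0 of X with a local base B of size at most \<tau>. The preimages of the members
  of B under the orbit map g \<mapsto> g x0 are neighbourhoods of the unit, and inv(G) \<le> \<tau> yields,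
  for each of them, at most \<tau> neighbourhoods of the unit whose conjugates all lie inside it.
  An element g in all of these \<tau> neighbourhoods has every conjugate h g h^-1 in every
  preimage, so (X being T1) h g h^-1 fixes x0, i.e. g fixes h^-1 x0. By transitivity g acts
  trivially, and by effectiveness g = 1. Hence the unit is an intersection of at most \<tau>
  open sets, and by homogeneity of G so is every point: \<psi>(G) \<le> \<tau>.\<close>

lemma UN_lepoll_infinite:
  assumes "infinite K" "I \<lesssim> K" "\<And>i. i \<in> I \<Longrightarrow> A i \<lesssim> K"
  shows "(\<Union>i\<in>I. A i) \<lesssim> K"
  using assms card_of_UNION_ordLeq_infinite[of K I A] by (simp add: lepoll_def card_of_ordLeq)

lemma (in group) l_translation_image_eq:
  assumes "a \<in> carrier G" "V \<subseteq> carrier G"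
  shows "(\<lambda>v. a \<otimes> v) ` V = {y \<in> carrier G. inv a \<otimes> y \<in> V}"
proof (intro equalityI subsetI)
  fix y assume "y \<in> (\<lambda>v. a \<otimes> v) ` V"
  then show "y \<in> {y \<in> carrier G. inv a \<otimes> y \<in> V}"
    using assms by (auto simp: m_assoc[symmetric])
next
  fix y assume y: "y \<in> {y \<in> carrier G. inv a \<otimes> y \<in> V}"
  then have "y = a \<otimes> (inv a \<otimes> y)"
    using assms by (simp add: m_assoc[symmetric])
  with y show "y \<in> (\<lambda>v. a \<otimes> v) ` V" by blast
qed

lemma (in group) topological_group_openin_l_translation:
  assumes "topological_group G T" "a \<in> carrier G" "openin T V"
  shows "openin T ((\<lambda>v. a \<otimes> v) ` V)"
proof -
  have top: "topspace T = carrier G"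
    and mult: "continuous_map (prod_topology T T) T (\<lambda>p. fst p \<otimes> snd p)"
    using assms(1) by (auto simp: topological_group_def)
  have "continuous_map T (prod_topology T T) (\<lambda>y. (inv a, y))"
    using assms(2) top by (simp add: continuous_map_paired)
  from continuous_map_compose[OF this mult]
  have "continuous_map T T (\<lambda>y. inv a \<otimes> y)" by (simp add: o_def)
  from openin_continuous_map_preimage[OF this assms(3)]
  show ?thesis
    using l_translation_image_eq[OF assms(2)] openin_subset[OF assms(3)] top by simp
qed

lemma (in group) topological_group_pseudocharacter_le:
  assumes "topological_group G T"
    and "F \<lesssim> K" "\<forall>V\<in>F. openin T V \<and> \<one> \<in> V" "topspace T \<inter> \<Inter>F = {\<one>}"
  shows "pseudocharacter_le T K"
  unfolding pseudocharacter_le_def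
proof
  have top: "topspace T = carrier G" using assms(1) by (simp add: topological_group_def)
  fix a assume "a \<in> topspace T"
  then have a: "a \<in> carrier G" using top by simp
  have sub: "V \<subseteq> carrier G" if "V \<in> F" for V
    using assms(3) openin_subset that top by metis
  define \<gamma> where "\<gamma> = (\<lambda>V. (\<lambda>v. a \<otimes> v) ` V) ` F"
  have "\<gamma> \<lesssim> K"
    unfolding \<gamma>_def using image_lepoll assms(2) lepoll_trans by blast
  moreover have "\<forall>V\<in>\<gamma>. openin T V \<and> a \<in> V"
    unfolding \<gamma>_def using assms(3) topological_group_openin_l_translation[OF assms(1) a]
    by (force intro: rev_image_eqI[where x = \<one>] simp: a)
  moreover have "topspace T \<inter> \<Inter>\<gamma> = {a}"
  proof -
    have "topspace T \<inter> \<Inter>\<gamma> = {y \<in> carrier G. inv a \<otimes> y \<in> topspace T \<inter> \<Inter>F}"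
      using a top unfolding \<gamma>_def by (auto simp: l_translation_image_eq[OF a sub])
    also have "\<dots> = {y \<in> carrier G. inv a \<otimes> y = \<one>}"
      using assms(4) by blast
    also have "\<dots> = {a}"
      using a inv_solve_left[OF one_closed a] by (auto simp: eq_commute[of _ \<one>])
    finally show ?thesis .
  qed
  ultimately show "\<exists>\<gamma>. \<gamma> \<lesssim> K \<and> (\<forall>V\<in>\<gamma>. openin T V \<and> a \<in> V) \<and> topspace T \<inter> \<Inter>\<gamma> = {a}"
    by blast
qed

lemma t1_space_Inter_local_base:
  assumes "t1_space X" "x \<in> topspace X" "y \<in> topspace X"
    and "\<forall>U. openin X U \<and> x \<in> U \<longrightarrow> (\<exists>V\<in>B. V \<subseteq> U)" "\<forall>V\<in>B. y \<in> V"
  shows "y = x"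
proof (rule ccontr)
  assume "y \<noteq> x"
  then obtain U where "openin X U" "x \<in> U" "y \<notin> U"
    using assms(1-3) unfolding t1_space_def by metis
  then show False using assms(4,5) by blast
qed

lemma continuous_action_orbit_map:
  assumes "continuous_action G TG X act" "x \<in> topspace X"
  shows "continuous_map TG X (\<lambda>g. act g x)"
proof -
  have "continuous_map TG (prod_topology TG X) (\<lambda>g. (g, x))"
    using assms(2) by (simp add: continuous_map_paired)
  moreover have "continuous_map (prod_topology TG X) X (\<lambda>p. act (fst p) (snd p))"
    using assms(1) by (simp add: continuous_action_def)
  ultimately have "continuous_map TG X ((\<lambda>p. act (fst p) (snd p)) \<circ> (\<lambda>g. (g, x)))"
    by (rule continuous_map_compose)
  then show ?thesis by (simp add: o_def)
qed

lemma (in group) conjugates_fix_point_imp_one: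
  assumes act_mult: "\<forall>g\<in>carrier G. \<forall>h\<in>carrier G. \<forall>x\<in>topspace X. act (g \<otimes> h) x = act g (act h x)"
    and "effective_action G X act" "transitive_action G X act"
    and x0: "x0 \<in> topspace X" and g: "g \<in> carrier G"
    and conj_fix: "\<forall>h\<in>carrier G. act (h \<otimes> g \<otimes> inv h) x0 = x0"
  shows "g = \<one>"
proof -
  have "act g y = y" if "y \<in> topspace X" for y
  proof -
    obtain h where h: "h \<in> carrier G" and y: "y = act h x0"
      using assms(3) x0 \<open>y \<in> topspace X\<close> unfolding transitive_action_def by blast
    have "act h x0 = act h (act (inv h \<otimes> g \<otimes> h) x0)"
      using conj_fix h by (metis inv_closed inv_inv)
    also have "\<dots> = act (h \<otimes> (inv h \<otimes> g \<otimes> h)) x0"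
      using act_mult h g x0 by simp
    also have "h \<otimes> (inv h \<otimes> g \<otimes> h) = g \<otimes> h"
      using h g by (simp add: m_assoc[symmetric])
    also have "act (g \<otimes> h) x0 = act g (act h x0)"
      using act_mult h g x0 by simp
    finally show ?thesis using y by simp
  qed
  then show ?thesis using assms(2) g unfolding effective_action_def by blast
qed

lemma (in group) effective_transitive_action_unit_Inter:
  assumes "infinite K" "t1_space X" "character_le X K" and top: "topspace TG = carrier G"
    and act: "continuous_action G TG X act"
    and eff: "effective_action G X act" and tr: "transitive_action G X act"
    and "invariance_le G TG K"
  obtains F where "F \<lesssim> K" "\<forall>V\<in>F. openin TG V \<and> \<one> \<in> V" "topspace TG \<inter> \<Inter>F = {\<one>}"
proof (cases "topspace X = {}")
  case True
  then have "carrier G = {\<one>}"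
    using eff unfolding effective_action_def by auto
  then show ?thesis using that[of "{}"] top by simp
next
  case False
  then obtain x0 where x0: "x0 \<in> topspace X" by blast
  obtain B where "B \<lesssim> K" and B: "\<forall>W\<in>B. openin X W \<and> x0 \<in> W"
    and B_base: "\<forall>U. openin X U \<and> x0 \<in> U \<longrightarrow> (\<exists>W\<in>B. W \<subseteq> U)"
    using assms(3) x0 unfolding character_le_def by metis
  have orbit: "continuous_map TG X (\<lambda>g. act g x0)"
    using continuous_action_orbit_map[OF act x0] .
  define Orb where "Orb W = {g \<in> topspace TG. act g x0 \<in> W}" for W
  have "openin TG (Orb W) \<and> \<one> \<in> Orb W" if "W \<in> B" for W
    using openin_continuous_map_preimage[OF orbit] B that act x0 top
    unfolding Orb_def continuous_action_def by auto
  then have "\<forall>W\<in>B. \<exists>\<gamma>. \<gamma> \<lesssim> K \<and> (\<forall>V\<in>\<gamma>. openin TG V \<and> \<one> \<in> V) \<and>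
      (\<forall>h\<in>carrier G. \<exists>V\<in>\<gamma>. (\<lambda>v. h \<otimes> v \<otimes> inv h) ` V \<subseteq> Orb W)"
    using assms(8) unfolding invariance_le_def by blast
  then obtain \<gamma> where \<gamma>: "\<And>W. W \<in> B \<Longrightarrow> \<gamma> W \<lesssim> K \<and> (\<forall>V\<in>\<gamma> W. openin TG V \<and> \<one> \<in> V) \<and>
      (\<forall>h\<in>carrier G. \<exists>V\<in>\<gamma> W. (\<lambda>v. h \<otimes> v \<otimes> inv h) ` V \<subseteq> Orb W)"
    by metis
  show ?thesis
  proof (rule that[of "\<Union>W\<in>B. \<gamma> W"])
    show "(\<Union>W\<in>B. \<gamma> W) \<lesssim> K"
      using UN_lepoll_infinite[OF assms(1) \<open>B \<lesssim> K\<close>] \<gamma> by blast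
    show nbhds: "\<forall>V\<in>(\<Union>W\<in>B. \<gamma> W). openin TG V \<and> \<one> \<in> V"
      using \<gamma> by blast
    have "g = \<one>" if g: "g \<in> carrier G" and g_in: "\<forall>V\<in>(\<Union>W\<in>B. \<gamma> W). g \<in> V" for g
    proof (rule conjugates_fix_point_imp_one[OF _ eff tr x0 g])
      show "\<forall>g\<in>carrier G. \<forall>h\<in>carrier G. \<forall>x\<in>topspace X. act (g \<otimes> h) x = act g (act h x)"
        using act unfolding continuous_action_def by blast
      show "\<forall>h\<in>carrier G. act (h \<otimes> g \<otimes> inv h) x0 = x0"
      proof
        fix h assume h: "h \<in> carrier G"
        have "h \<otimes> g \<otimes> inv h \<in> Orb W" if "W \<in> B" for W
          using \<gamma>[OF that] h g_in that by blast
        moreover have "act (h \<otimes> g \<otimes> inv h) x0 \<in> topspace X"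
          using orbit g h top by (auto simp: continuous_map_def Pi_iff)
        ultimately show "act (h \<otimes> g \<otimes> inv h) x0 = x0"
          using t1_space_Inter_local_base[OF assms(2) x0 _ B_base] unfolding Orb_def by blast
      qed
    qed
    then show "topspace TG \<inter> \<Inter>(\<Union>W\<in>B. \<gamma> W) = {\<one>}"
      using nbhds top by auto
  qed
qed

theorem corollary3p10:
  fixes K :: "'k set" and X :: "'x topology"
  assumes "infinite K"
    and "tychonoff_space X"
    and "character_le X K"
  shows "\<not> (\<exists>(G :: ('g, 'b) monoid_scheme) TG (act :: 'g \<Rightarrow> 'x \<Rightarrow> 'x).
              topological_group G TG \<and> tychonoff_space TG
            \<and> continuous_action G TG X act \<and> effective_action G X act \<and> transitive_action G X act
            \<and> \<not> pseudocharacter_le TG K \<and> invariance_le G TG K)"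
proof
  assume "\<exists>(G :: ('g, 'b) monoid_scheme) TG (act :: 'g \<Rightarrow> 'x \<Rightarrow> 'x).
              topological_group G TG \<and> tychonoff_space TG
            \<and> continuous_action G TG X act \<and> effective_action G X act \<and> transitive_action G X act
            \<and> \<not> pseudocharacter_le TG K \<and> invariance_le G TG K"
  then obtain G :: "('g, 'b) monoid_scheme" and TG and act :: "'g \<Rightarrow> 'x \<Rightarrow> 'x"
    where TG: "topological_group G TG" and act: "continuous_action G TG X act"
      and eff: "effective_action G X act" and tr: "transitive_action G X act"
      and not_psi: "\<not> pseudocharacter_le TG K" and inv: "invariance_le G TG K"
    by blast
  interpret group G using TG by (simp add: topological_group_def)
  have t1: "t1_space X" using assms(2) by (simp add: tychonoff_space_def)
  have top: "topspace TG = carrier G" using TG by (simp add: topological_group_def)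
  obtain F where "F \<lesssim> K" "\<forall>V\<in>F. openin TG V \<and> \<one>\<^bsub>G\<^esub> \<in> V"
    and "topspace TG \<inter> \<Inter>F = {\<one>\<^bsub>G\<^esub>}"
    by (rule effective_transitive_action_unit_Inter[OF assms(1) t1 assms(3) top act eff tr inv])
  then have "pseudocharacter_le TG K"
    by (rule topological_group_pseudocharacter_le[OF TG])
  with not_psi show False by contradiction
qed

end
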